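(* Let $X_1$ be a real random variable with c.d.f. $F$, mean $\mu$ and standard deviation $\sigma$. Let $0<a<b<1$ and $\xi:=1-(b-a)$. Then \[\sigma^{(a,b)}\leq\frac{\sigma}{1-\xi},\] and for any $1<q\leq2$, \[\sigma^{(a,b)}\leq\frac{\sqrt2\,\nu_q^{q/2}\,(\Delta^{(a,b)})^{1-\frac q2}}{1-\xi}.\] If $\sigma<+\infty$, $\xi<1/2$ and $\rho_{F,2}(\xi)<1/3$, then \[\sigma\leq\sqrt{\frac{1-\xi}{1-\left(\frac{2-\xi}{1-\xi}\right)\rho_{F,2}^2(\xi)}}\,\sigma^{(a,b)}.\]
   Context: $\nu_q:=(\mathbb{E}|X_1-\mu|^q)^{1/q}$, $\sigma=\nu_2$. $F^{-1}(u):=\inf\{t:F(t)\ge u\}$. $\mu^{(a,b)}:=\frac1{b-a}\int_a^bF^{-1}(u)du$, $(\sigma^{(a,b)})^2:=\frac1{b-a}\int_a^b(F^{-1}(u)-\mu^{(a,b)})^2du$, $\Delta^{(a,b)}:=F^{-1}(b)-F^{-1}(a)$. For $\xi>0$, $\rho_{F,2}(\xi):=\sup\{(\mathbb{E}[|X_1-\mu|^2Z])^{1/2}/\sigma: 0\le Z\le 1 \text{ a random variable (jointly defined with } X_1), \mathbb{E}Z\le\xi\}$ if $\sigma>0$, and $0$ if $\sigma=0$. *)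

theory Defs
  imports "HOL-Probability.Probability"
begin

definition cdfX :: "'a measure \<Rightarrow> ('a \<Rightarrow> real) \<Rightarrow> real \<Rightarrow> real" where
  "cdfX M X t = measure M {x \<in> space M. X x \<le> t}"

definition quantile :: "'a measure \<Rightarrow> ('a \<Rightarrow> real) \<Rightarrow> real \<Rightarrow> real" where
  "quantile M X u = Inf {t. u \<le> cdfX M X t}"

definition meanX :: "'a measure \<Rightarrow> ('a \<Rightarrow> real) \<Rightarrow> real" where
  "meanX M X = (\<integral>x. X x \<partial>M)"

definition nu :: "'a measure \<Rightarrow> ('a \<Rightarrow> real) \<Rightarrow> real \<Rightarrow> real" where
  "nu M X q = (\<integral>x. \<bar>X x - meanX M X\<bar> powr q \<partial>M) powr (1 / q)"

definition sigmaX :: "'a measure \<Rightarrow> ('a \<Rightarrow> real) \<Rightarrow> real" where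
  "sigmaX M X = nu M X 2"

definition mu_ab :: "'a measure \<Rightarrow> ('a \<Rightarrow> real) \<Rightarrow> real \<Rightarrow> real \<Rightarrow> real" where
  "mu_ab M X a b = (1 / (b - a)) * (LINT u:{a..b}|lborel. quantile M X u)"

definition sigma_ab :: "'a measure \<Rightarrow> ('a \<Rightarrow> real) \<Rightarrow> real \<Rightarrow> real \<Rightarrow> real" where
  "sigma_ab M X a b =
     sqrt ((1 / (b - a)) * (LINT u:{a..b}|lborel. (quantile M X u - mu_ab M X a b)\<^sup>2))"

definition Delta_ab :: "'a measure \<Rightarrow> ('a \<Rightarrow> real) \<Rightarrow> real \<Rightarrow> real \<Rightarrow> real" where
  "Delta_ab M X a b = quantile M X b - quantile M X a"

definition rho2 :: "'a measure \<Rightarrow> ('a \<Rightarrow> real) \<Rightarrow> real \<Rightarrow> real" where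
  "rho2 M X \<xi> =
     (if sigmaX M X = 0 then 0
      else Sup {sqrt (\<integral>x. (X x - meanX M X)\<^sup>2 * Z x \<partial>M) / sigmaX M X | Z.
                  Z \<in> borel_measurable M \<and> (\<forall>x\<in>space M. 0 \<le> Z x \<and> Z x \<le> 1)
                  \<and> (\<integral>x. Z x \<partial>M) \<le> \<xi>})"

end

theory Submission
  imports Defs
begin

text \<open>By the quantile transform, X has the law of Q(U), where Q is the quantile function and U is
  uniform on (0,1). Hence the moments of X are integrals of Q over (0,1), while \<sigma>_ab is the
  standard deviation of Q on [a,b], so that (b - a) \<sigma>_ab^2 is the least value of the integral of
  (Q - c)^2 over [a,b]. Taking c = \<mu> gives the first bound; taking c = \<mu> clamped to [Q a, Q b]
  gives the second, since then (Q - c)^2 \<le> \<Delta>^(2 - q) |Q - \<mu>|^q on [a,b].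

  For the converse, split \<sigma>^2 into the contributions of [a,b] and of the tails (0,a) \<union> (b,1).
  As Q - \<mu> integrates to 0, the bias of the middle part equals that of the tails, and Cauchy-Schwarz
  on the tails yields \<sigma>^2 \<le> (b - a) \<sigma>_ab^2 + T / (b - a), T being the tail contribution. Finally
  T = E[(X - \<mu>)^2 Z] for Z = h(X), where h(Q(U)) is the conditional probability that U lies in the
  tails; since E Z = \<xi>, the definition of \<rho> gives T \<le> \<rho>^2 \<sigma>^2.\<close>

lemma set_integral_nonneg:
  fixes f :: "'a \<Rightarrow> real"
  assumes "\<And>x. x \<in> A \<Longrightarrow> 0 \<le> f x"
  shows "0 \<le> (LINT x:A|M. f x)"
  unfolding set_lebesgue_integral_def
  using assms by (intro integral_nonneg_AE AE_I2) (auto simp: indicator_def)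

lemma set_integral_mono_set:
  fixes f :: "'a \<Rightarrow> real"
  assumes "set_integrable M A f" "B \<in> sets M" "B \<subseteq> A" "\<And>x. x \<in> A \<Longrightarrow> 0 \<le> f x"
  shows "(LINT x:B|M. f x) \<le> (LINT x:A|M. f x)"
proof -
  have "set_integrable M B f"
    using assms(1-3) by (rule set_integrable_subset)
  then show ?thesis
    using assms unfolding set_lebesgue_integral_def set_integrable_def
    by (intro integral_mono) (auto simp: indicator_def)
qed

lemma set_integral_power2_diff:
  fixes f :: "'a \<Rightarrow> real"
  assumes A: "A \<in> sets M" "emeasure M A < \<infinity>"
    and f: "set_integrable M A f" "set_integrable M A (\<lambda>x. (f x)\<^sup>2)"
  shows "(LINT x:A|M. (f x - c)\<^sup>2)
       = (LINT x:A|M. (f x)\<^sup>2) - 2 * c * (LINT x:A|M. f x) + c\<^sup>2 * measure M A"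
proof -
  have const: "set_integrable M A (\<lambda>x. c\<^sup>2)"
    using A unfolding set_integrable_def by simp
  have "(LINT x:A|M. (f x - c)\<^sup>2) = (LINT x:A|M. ((f x)\<^sup>2 - 2 * c * f x) + c\<^sup>2)"
    by (simp add: power2_diff algebra_simps)
  also have "\<dots> = (LINT x:A|M. (f x)\<^sup>2) - 2 * c * (LINT x:A|M. f x) + c\<^sup>2 * measure M A"
    using A f const by (simp add: set_integral_const)
  finally show ?thesis .
qed

lemma set_integral_power2_diff_average:
  fixes f :: "'a \<Rightarrow> real"
  assumes A: "A \<in> sets M" "emeasure M A < \<infinity>" "0 < measure M A"
    and f: "set_integrable M A f" "set_integrable M A (\<lambda>x. (f x)\<^sup>2)"
  defines "m \<equiv> (LINT x:A|M. f x) / measure M A"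
  shows "(LINT x:A|M. (f x - c)\<^sup>2) = (LINT x:A|M. (f x - m)\<^sup>2) + measure M A * (m - c)\<^sup>2"
  using A unfolding set_integral_power2_diff[OF A(1,2) f] m_def
  by (simp add: field_simps power2_eq_square)

lemma set_integral_square_le:
  fixes f :: "'a \<Rightarrow> real"
  assumes A: "A \<in> sets M" "emeasure M A < \<infinity>" "0 < measure M A"
    and f: "set_integrable M A f" "set_integrable M A (\<lambda>x. (f x)\<^sup>2)"
  shows "(LINT x:A|M. f x)\<^sup>2 \<le> measure M A * (LINT x:A|M. (f x)\<^sup>2)"
proof -
  define m where "m = (LINT x:A|M. f x) / measure M A"
  have "measure M A * m\<^sup>2 \<le> (LINT x:A|M. (f x)\<^sup>2)"
    using set_integral_power2_diff_average[OF A f, of 0]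
      set_integral_nonneg[of A "\<lambda>x. (f x - m)\<^sup>2" M]
    unfolding m_def by simp
  then show ?thesis
    using A(3) unfolding m_def by (simp add: field_simps power2_eq_square)
qed

lemma power2_diff_clamp_le:
  fixes y lo hi m q :: real
  assumes "lo \<le> y" "y \<le> hi" "0 \<le> q" "q \<le> 2"
  shows "(y - max lo (min hi m))\<^sup>2 \<le> (hi - lo) powr (2 - q) * \<bar>y - m\<bar> powr q"
proof -
  define d where "d = \<bar>y - max lo (min hi m)\<bar>"
  have d_le: "d \<le> \<bar>y - m\<bar>" "d \<le> hi - lo"
    using assms unfolding d_def by auto
  show ?thesis
  proof (cases "d = 0")
    case True
    then show ?thesis unfolding d_def by simp
  next
    case False
    then have "0 < d" unfolding d_def by simp
    then have "(y - max lo (min hi m))\<^sup>2 = d powr (2 - q) * d powr q"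
      unfolding d_def by (simp flip: powr_add)
    also have "\<dots> \<le> (hi - lo) powr (2 - q) * \<bar>y - m\<bar> powr q"
      using \<open>0 < d\<close> d_le assms by (intro mult_mono powr_mono2) auto
    finally show ?thesis .
  qed
qed

lemma cdfX_eq_cdf_distr:
  assumes "X \<in> borel_measurable M"
  shows "cdfX M X = cdf (distr M borel X)"
  using assms by (simp add: fun_eq_iff cdfX_def cdf_def measure_distr vimage_def Int_def conj_commute)

context
  fixes M :: "'a measure" and X :: "'a \<Rightarrow> real"
  assumes M: "prob_space M" and X: "X \<in> borel_measurable M"
begin

interpretation cdf_distribution "distr M borel X"
  using M X unfolding cdf_distribution_def real_distribution_def real_distribution_axioms_def
  by (auto intro!: prob_space.prob_space_distr)

lemma quantile_eq_pseudoinverse: "quantile M X = (\<lambda>u. Inf {t. u \<le> C t})"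
  by (simp add: fun_eq_iff quantile_def cdfX_eq_cdf_distr[OF X])

lemma mono_on_quantile: "mono_on {0<..<1} (quantile M X)"
  using mono_I by (simp add: quantile_eq_pseudoinverse)

lemma quantile_measurable: "quantile M X \<in> borel_measurable (restrict_space lborel {0<..<1})"
  using measurable_CI
  by (simp add: quantile_eq_pseudoinverse measurable_cong_sets[OF sets_restrict_space_cong[OF sets_lborel]])

lemma distr_quantile: "distr (restrict_space lborel {0<..<1}) borel (quantile M X) = distr M borel X"
  using distr_I_eq_M by (simp add: quantile_eq_pseudoinverse)

lemma integrable_quantile_iff:
  fixes g :: "real \<Rightarrow> 'b::{banach, second_countable_topology}"
  assumes g: "g \<in> borel_measurable borel"
  shows "integrable M (\<lambda>x. g (X x)) \<longleftrightarrow> set_integrable lborel {0<..<1} (\<lambda>u. g (quantile M X u))"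
proof -
  have "integrable M (\<lambda>x. g (X x)) \<longleftrightarrow> integrable (distr M borel X) g"
    by (rule integrable_distr_eq[of X M borel g, symmetric]) (use X g in auto)
  also have "\<dots> \<longleftrightarrow> integrable (restrict_space lborel {0<..<1}) (\<lambda>u. g (quantile M X u))"
    using quantile_measurable g by (simp flip: distr_quantile add: integrable_distr_eq)
  also have "\<dots> \<longleftrightarrow> set_integrable lborel {0<..<1} (\<lambda>u. g (quantile M X u))"
    by (simp add: set_integrable_eq)
  finally show ?thesis .
qed

lemma integral_quantile:
  fixes g :: "real \<Rightarrow> 'b::{banach, second_countable_topology}"
  assumes g: "g \<in> borel_measurable borel"
  shows "(\<integral>x. g (X x) \<partial>M) = (LINT u:{0<..<1}|lborel. g (quantile M X u))"
proof -
  have "(\<integral>x. g (X x) \<partial>M) = integral\<^sup>L (distr M borel X) g"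
    by (rule integral_distr[of X M borel g, symmetric]) (use X g in auto)
  also have "\<dots> = integral\<^sup>L (restrict_space lborel {0<..<1}) (\<lambda>u. g (quantile M X u))"
    using quantile_measurable g by (simp flip: distr_quantile add: integral_distr)
  also have "\<dots> = (LINT u:{0<..<1}|lborel. g (quantile M X u))"
    unfolding set_lebesgue_integral_def by (simp add: integral_restrict_space)
  finally show ?thesis .
qed

end

lemma emeasure_subset_unit_interval_less_top:
  assumes "A \<subseteq> {0<..<1::real}"
  shows "emeasure lborel A < \<infinity>"
proof -
  have "emeasure lborel A \<le> emeasure lborel {0<..<1::real}"
    using assms by (intro emeasure_mono) auto
  also have "\<dots> < \<infinity>"
    by simp
  finally show ?thesis .
qed

locale quantile_trimming =
  fixes Q :: "real \<Rightarrow> real" and a b :: real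
  assumes mono_Q: "mono_on {0<..<1} Q"
    and a_pos: "0 < a" and a_less_b: "a < b" and b_less_1: "b < 1"
begin

definition trimmed_mean :: real where
  "trimmed_mean = (1 / (b - a)) * (LINT u:{a..b}|lborel. Q u)"

definition trimmed_var :: real where
  "trimmed_var = (1 / (b - a)) * (LINT u:{a..b}|lborel. (Q u - trimmed_mean)\<^sup>2)"

definition tails :: "real set" where
  "tails = {0<..<a} \<union> {b<..<1}"

lemma Q_le: "0 < u \<Longrightarrow> u \<le> v \<Longrightarrow> v < 1 \<Longrightarrow> Q u \<le> Q v"
  using mono_Q by (auto intro: mono_onD)

lemma Q_middle: "a \<le> u \<Longrightarrow> u \<le> b \<Longrightarrow> Q a \<le> Q u \<and> Q u \<le> Q b"
  using Q_le a_pos b_less_1 by auto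

lemma middle_subset: "{a..b} \<subseteq> {0<..<1}"
  using a_pos b_less_1 by auto

lemma tails_subset: "tails \<subseteq> {0<..<1}"
  using a_pos a_less_b b_less_1 unfolding tails_def by auto

lemma sets_tails [measurable]: "tails \<in> sets borel"
  unfolding tails_def by simp

lemma measure_tails: "measure lborel tails = 1 - (b - a)"
proof -
  have "measure lborel tails = measure lborel {0<..<a} + measure lborel {b<..<1}"
    unfolding tails_def using a_pos a_less_b b_less_1 by (intro measure_Union) auto
  then show ?thesis
    using a_pos a_less_b b_less_1 by simp
qed

lemma set_borel_measurable_Q:
  fixes g :: "real \<Rightarrow> real"
  assumes g: "g \<in> borel_measurable borel" and A: "A \<in> sets borel" "A \<subseteq> {0<..<1}"
  shows "set_borel_measurable lborel A (\<lambda>u. g (Q u))"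
proof -
  have "Q \<in> borel_measurable (restrict_space borel A)"
    using borel_measurable_mono_on_fnc[OF mono_Q] A(2) by (rule measurable_restrict_mono)
  then have "(\<lambda>u. g (Q u)) \<in> borel_measurable (restrict_space lborel A)"
    using measurable_compose g
    by (simp add: measurable_cong_sets[OF sets_restrict_space_cong[OF sets_lborel]])
  then show ?thesis
    using A unfolding set_borel_measurable_def by (simp add: borel_measurable_restrict_space_iff)
qed

lemma set_integrable_Q_bounded:
  fixes g :: "real \<Rightarrow> real"
  assumes "g \<in> borel_measurable borel" "A \<in> sets borel" "A \<subseteq> {0<..<1}"
    and bound: "\<And>u. u \<in> A \<Longrightarrow> \<bar>g (Q u)\<bar> \<le> B"
  shows "set_integrable lborel A (\<lambda>u. g (Q u))"
  unfolding set_integrable_def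
proof (rule integrableI_bounded_set[where A=A and B=B])
  show "(\<lambda>u. indicator A u *\<^sub>R g (Q u)) \<in> borel_measurable lborel"
    using set_borel_measurable_Q[OF assms(1-3)] unfolding set_borel_measurable_def .
qed (use assms emeasure_subset_unit_interval_less_top in auto)

lemma set_integrable_middle:
  fixes g :: "real \<Rightarrow> real"
  assumes "continuous_on UNIV g"
  shows "set_integrable lborel {a..b} (\<lambda>u. g (Q u))"
proof -
  have "compact (g ` {Q a..Q b})"
    by (intro compact_continuous_image continuous_on_subset[OF assms]) auto
  then obtain B where "\<And>t. t \<in> {Q a..Q b} \<Longrightarrow> norm (g t) \<le> B"
    using compact_imp_bounded bounded_iff by (metis image_eqI)
  then show ?thesis
    using assms Q_middle middle_subset
    by (intro set_integrable_Q_bounded[where B=B]) (auto intro: borel_measurable_continuous_onI)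
qed

lemma trimmed_var_nonneg: "0 \<le> trimmed_var"
  unfolding trimmed_var_def using a_less_b by (simp add: set_integral_nonneg)

lemma integral_middle_power2_diff:
  "(LINT u:{a..b}|lborel. (Q u - c)\<^sup>2) = (b - a) * trimmed_var + (b - a) * (trimmed_mean - c)\<^sup>2"
proof -
  have "(LINT u:{a..b}|lborel. (Q u - c)\<^sup>2)
      = (LINT u:{a..b}|lborel. (Q u - trimmed_mean)\<^sup>2) + (b - a) * (trimmed_mean - c)\<^sup>2"
    using set_integral_power2_diff_average[of "{a..b}" lborel Q c] a_less_b
      set_integrable_middle[OF continuous_on_id]
      set_integrable_middle[OF continuous_on_power[OF continuous_on_id]]
    by (simp add: trimmed_mean_def)
  then show ?thesis
    using a_less_b by (simp add: trimmed_var_def)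
qed

lemma trimmed_var_le_integral:
  assumes "set_integrable lborel {0<..<1} (\<lambda>u. (Q u - c)\<^sup>2)"
  shows "(b - a) * trimmed_var \<le> (LINT u:{0<..<1}|lborel. (Q u - c)\<^sup>2)"
proof -
  have "(b - a) * trimmed_var \<le> (LINT u:{a..b}|lborel. (Q u - c)\<^sup>2)"
    using integral_middle_power2_diff[of c] a_less_b by simp
  also have "\<dots> \<le> (LINT u:{0<..<1}|lborel. (Q u - c)\<^sup>2)"
    using assms middle_subset by (intro set_integral_mono_set) auto
  finally show ?thesis .
qed

lemma trimmed_var_le_moment:
  assumes q: "0 \<le> q" "q \<le> 2"
    and moment: "set_integrable lborel {0<..<1} (\<lambda>u. \<bar>Q u - m\<bar> powr q)"
  shows "(b - a) * trimmed_var
       \<le> (Q b - Q a) powr (2 - q) * (LINT u:{0<..<1}|lborel. \<bar>Q u - m\<bar> powr q)"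
proof -
  define c where "c = max (Q a) (min (Q b) m)"
  have "(b - a) * trimmed_var \<le> (LINT u:{a..b}|lborel. (Q u - c)\<^sup>2)"
    using integral_middle_power2_diff[of c] a_less_b by simp
  also have "\<dots> \<le> (LINT u:{a..b}|lborel. (Q b - Q a) powr (2 - q) * \<bar>Q u - m\<bar> powr q)"
  proof (rule set_integral_mono)
    show "set_integrable lborel {a..b} (\<lambda>u. (Q u - c)\<^sup>2)"
      by (rule set_integrable_middle) (intro continuous_intros)
    show "set_integrable lborel {a..b} (\<lambda>u. (Q b - Q a) powr (2 - q) * \<bar>Q u - m\<bar> powr q)"
      using set_integrable_subset[OF moment] middle_subset by auto
  qed (use Q_middle q in \<open>auto simp: c_def intro!: power2_diff_clamp_le\<close>)
  also have "\<dots> \<le> (Q b - Q a) powr (2 - q) * (LINT u:{0<..<1}|lborel. \<bar>Q u - m\<bar> powr q)"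
    using moment middle_subset by (auto intro!: mult_left_mono set_integral_mono_set)
  finally show ?thesis .
qed
lemma variance_le_trimmed_var_tails:
  assumes Q_int: "set_integrable lborel {0<..<1} Q"
    and square_int: "set_integrable lborel {0<..<1} (\<lambda>u. (Q u - m)\<^sup>2)"
    and mean: "(LINT u:{0<..<1}|lborel. Q u) = m"
  shows "(LINT u:{0<..<1}|lborel. (Q u - m)\<^sup>2)
       \<le> (b - a) * trimmed_var + (LINT u:tails|lborel. (Q u - m)\<^sup>2) / (b - a)"
proof -
  define p where "p = b - a"
  define T where "T = (LINT u:tails|lborel. (Q u - m)\<^sup>2)"
  have p: "0 < p" "p < 1"
    using a_pos a_less_b b_less_1 unfolding p_def by auto
  have partition: "{0<..<1} = tails \<union> {a..b}" "tails \<inter> {a..b} = {}"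
    using a_pos a_less_b b_less_1 unfolding tails_def by auto
  have const_int: "set_integrable lborel {0<..<1::real} (\<lambda>u. m)"
    unfolding set_integrable_def by simp
  have centered_int: "set_integrable lborel {0<..<1} (\<lambda>u. Q u - m)"
    using Q_int const_int by (rule set_integral_diff)
  have tails_int: "set_integrable lborel tails (\<lambda>u. Q u - m)"
      "set_integrable lborel tails (\<lambda>u. (Q u - m)\<^sup>2)"
    and middle_int: "set_integrable lborel {a..b} (\<lambda>u. Q u - m)"
      "set_integrable lborel {a..b} (\<lambda>u. (Q u - m)\<^sup>2)"
    using set_integrable_subset[OF centered_int] set_integrable_subset[OF square_int]
      tails_subset middle_subset by auto
  have variance_split:
    "(LINT u:{0<..<1}|lborel. (Q u - m)\<^sup>2) = T + (LINT u:{a..b}|lborel. (Q u - m)\<^sup>2)"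
    unfolding T_def partition(1) using partition(2) tails_int(2) middle_int(2) by (rule set_integral_Un)
  have "0 = (LINT u:{0<..<1}|lborel. Q u - m)"
    using Q_int const_int mean by (simp add: set_integral_const)
  also have "\<dots> = (LINT u:tails|lborel. Q u - m) + (LINT u:{a..b}|lborel. Q u - m)"
    unfolding partition(1) using partition(2) tails_int(1) middle_int(1) by (rule set_integral_Un)
  finally have bias: "(LINT u:{a..b}|lborel. Q u - m) = - (LINT u:tails|lborel. Q u - m)"
    by simp
  have "(LINT u:{a..b}|lborel. Q u - m) = p * (trimmed_mean - m)"
    using set_integrable_middle[of "\<lambda>x. x"] set_integrable_middle[of "\<lambda>_. m"] p
    unfolding trimmed_mean_def p_def by (simp add: set_integral_const field_simps)
  then have "(p * (trimmed_mean - m))\<^sup>2 = (LINT u:tails|lborel. Q u - m)\<^sup>2"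
    using bias by (metis power2_minus)
  also have "\<dots> \<le> (1 - p) * T"
    using set_integral_square_le[of tails lborel "\<lambda>u. Q u - m"] tails_int p measure_tails
      emeasure_subset_unit_interval_less_top[OF tails_subset]
    unfolding T_def p_def by simp
  finally have "p * (trimmed_mean - m)\<^sup>2 \<le> (1 - p) * T / p"
    using p by (simp add: field_simps power2_eq_square)
  then show ?thesis
    using variance_split integral_middle_power2_diff[of m] p unfolding T_def[symmetric] p_def[symmetric]
    by (simp add: field_simps)
qed

definition level :: "real \<Rightarrow> real set" where
  "level t = {u \<in> {0<..<1}. Q u = t}"

definition tail_share :: "real \<Rightarrow> real" where
  "tail_share t = measure lborel (tails \<inter> level t) / measure lborel (level t)"

text \<open>For U uniform on (0,1), tail_weight (Q U) is the conditional probability of U \<in> tails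
  given Q U: only the level sets of Q at Q a and Q b can meet both the tails and the middle,
  and these are split in proportion.\<close>
definition tail_weight :: "real \<Rightarrow> real" where
  "tail_weight t =
     (if t < Q a \<or> Q b < t then 1
      else if t = Q a then tail_share (Q a)
      else if t = Q b then tail_share (Q b)
      else 0)"

lemma level_subset: "level t \<subseteq> {0<..<1}"
  unfolding level_def by auto

lemma sets_level [measurable]: "level t \<in> sets borel"
proof -
  have "Q -` {t} \<inter> space (restrict_space borel {0<..<1})
      \<in> sets (restrict_space borel {0<..<1::real})"
    using borel_measurable_mono_on_fnc[OF mono_Q] by (rule measurable_sets) simp
  then show ?thesis
    unfolding level_def by (simp add: sets_restrict_space_iff vimage_def Int_def conj_commute)
qed

lemma emeasure_level_finite:
  "emeasure lborel (level t) < \<infinity>" "emeasure lborel (tails \<inter> level t) < \<infinity>"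
  using emeasure_subset_unit_interval_less_top[OF level_subset]
    emeasure_subset_unit_interval_less_top[OF order_trans[OF Int_lower2 level_subset]]
  by auto

lemma integrable_level_correction:
  "integrable lborel (\<lambda>u. indicator (tails \<inter> level t) u - tail_share t * indicator (level t) u)"
  using emeasure_level_finite[of t] by simp

lemma measure_tails_level_le: "measure lborel (tails \<inter> level t) \<le> measure lborel (level t)"
  using emeasure_level_finite by (intro measure_mono_fmeasurable) (auto simp: fmeasurable_def)

lemma tail_share_bounds: "0 \<le> tail_share t" "tail_share t \<le> 1"
  using measure_tails_level_le unfolding tail_share_def by (auto simp: divide_le_eq_1 less_le)

lemma tail_weight_bounds: "0 \<le> tail_weight t" "tail_weight t \<le> 1"
  unfolding tail_weight_def using tail_share_bounds by auto

lemma borel_measurable_tail_weight [measurable]: "tail_weight \<in> borel_measurable borel"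
  unfolding tail_weight_def by measurable

lemma indicator_tails_decompose:
  "indicator tails u * \<phi> (Q u)
   = indicator {0<..<1} u * (\<phi> (Q u) * tail_weight (Q u))
     + (\<Sum>t\<in>{Q a, Q b}. \<phi> t * (indicator (tails \<inter> level t) u - tail_share t * indicator (level t) u))"
proof (cases "u \<in> {0<..<1}")
  case False
  then have "u \<notin> tails" "\<And>t. u \<notin> level t"
    using a_pos a_less_b b_less_1 unfolding tails_def level_def by auto
  with False show ?thesis
    by simp
next
  case True
  have mono_at: "u \<le> a \<Longrightarrow> Q u \<le> Q a" "a \<le> u \<Longrightarrow> Q a \<le> Q u"
      "u \<le> b \<Longrightarrow> Q u \<le> Q b" "b \<le> u \<Longrightarrow> Q b \<le> Q u"
    using True Q_le a_pos a_less_b b_less_1 by auto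
  have "Q a \<le> Q b"
    using Q_middle a_less_b by auto
  then show ?thesis
    using True mono_at
    by (cases "Q a = Q b") (auto simp: tail_weight_def tails_def level_def indicator_def algebra_simps)
qed

lemma integral_level_correction:
  "(\<integral>u. indicator (tails \<inter> level t) u - tail_share t * indicator (level t) u \<partial>lborel) = 0"
proof -
  have "(\<integral>u. indicator (tails \<inter> level t) u - tail_share t * indicator (level t) u \<partial>lborel)
      = measure lborel (tails \<inter> level t) - tail_share t * measure lborel (level t)"
    using emeasure_level_finite by simp
  also have "\<dots> = 0"
    using measure_tails_level_le[of t] measure_nonneg[of lborel "tails \<inter> level t"]
    unfolding tail_share_def by (cases "measure lborel (level t) = 0") auto
  finally show ?thesis .
qed

lemma integral_tail_weight:
  fixes \<phi> :: "real \<Rightarrow> real"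
  assumes \<phi>: "\<phi> \<in> borel_measurable borel" and int: "set_integrable lborel {0<..<1} (\<lambda>u. \<phi> (Q u))"
  shows "(LINT u:{0<..<1}|lborel. \<phi> (Q u) * tail_weight (Q u)) = (LINT u:tails|lborel. \<phi> (Q u))"
proof -
  define correction where
    "correction t u = \<phi> t * (indicator (tails \<inter> level t) u - tail_share t * indicator (level t) u)"
    for t u
  have weighted_int: "set_integrable lborel {0<..<1} (\<lambda>u. \<phi> (Q u) * tail_weight (Q u))"
  proof (rule set_integrable_bound[OF int])
    show "set_borel_measurable lborel {0<..<1} (\<lambda>u. \<phi> (Q u) * tail_weight (Q u))"
      using \<phi> by (intro set_borel_measurable_Q[where g="\<lambda>t. \<phi> t * tail_weight t"]) auto
  qed (auto simp: abs_mult tail_weight_bounds mult_left_le)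
  have correction_int: "integrable lborel (correction t)" for t
    unfolding correction_def using integrable_level_correction by (rule integrable_mult_right)
  have "(LINT u:tails|lborel. \<phi> (Q u))
      = (\<integral>u. indicator {0<..<1} u * (\<phi> (Q u) * tail_weight (Q u)) + (\<Sum>t\<in>{Q a, Q b}. correction t u) \<partial>lborel)"
    unfolding set_lebesgue_integral_def correction_def
    by (simp add: indicator_tails_decompose del: sum.insert)
  also have "\<dots> = (LINT u:{0<..<1}|lborel. \<phi> (Q u) * tail_weight (Q u))
      + (\<Sum>t\<in>{Q a, Q b}. \<integral>u. correction t u \<partial>lborel)"
    using weighted_int correction_int unfolding set_integrable_def set_lebesgue_integral_def
    by (simp add: integral_sum del: sum.insert)
  also have "\<dots> = (LINT u:{0<..<1}|lborel. \<phi> (Q u) * tail_weight (Q u))"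
    unfolding correction_def by (simp add: integral_level_correction del: sum.insert)
  finally show ?thesis ..
qed

end

lemma sigmaX_eq_sqrt: "sigmaX M X = sqrt (\<integral>x. (X x - meanX M X)\<^sup>2 \<partial>M)"
  unfolding sigmaX_def nu_def by (simp add: powr_half_sqrt)

lemma sigmaX_nonneg: "0 \<le> sigmaX M X"
  unfolding sigmaX_eq_sqrt by (simp add: integral_nonneg_AE)

lemma nu_powr_half:
  assumes "0 < q"
  shows "nu M X q powr (q / 2) = sqrt (\<integral>x. \<bar>X x - meanX M X\<bar> powr q \<partial>M)"
  unfolding nu_def powr_powr using assms by (simp add: powr_half_sqrt)

lemma weighted_variance_le_rho2:
  assumes square_int: "integrable M (\<lambda>x. (X x - meanX M X)\<^sup>2)"
    and Z: "Z \<in> borel_measurable M" "\<forall>x\<in>space M. 0 \<le> Z x \<and> Z x \<le> 1" "(\<integral>x. Z x \<partial>M) \<le> \<xi>"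
  shows "sqrt (\<integral>x. (X x - meanX M X)\<^sup>2 * Z x \<partial>M) \<le> rho2 M X \<xi> * sigmaX M X"
proof -
  define S where "S = {sqrt (\<integral>x. (X x - meanX M X)\<^sup>2 * Z x \<partial>M) / sigmaX M X | Z.
      Z \<in> borel_measurable M \<and> (\<forall>x\<in>space M. 0 \<le> Z x \<and> Z x \<le> 1) \<and> (\<integral>x. Z x \<partial>M) \<le> \<xi>}"
  have weighted_le: "sqrt (\<integral>x. (X x - meanX M X)\<^sup>2 * W x \<partial>M) \<le> sigmaX M X"
    if "W \<in> borel_measurable M" "\<forall>x\<in>space M. 0 \<le> W x \<and> W x \<le> 1" for W
  proof -
    have "integrable M (\<lambda>x. (X x - meanX M X)\<^sup>2 * W x)"
      using square_int that
      by (intro Bochner_Integration.integrable_bound[OF square_int]) (auto intro!: mult_left_le)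
    then have "(\<integral>x. (X x - meanX M X)\<^sup>2 * W x \<partial>M) \<le> (\<integral>x. (X x - meanX M X)\<^sup>2 \<partial>M)"
      using square_int that by (intro integral_mono) (auto intro!: mult_left_le)
    then show ?thesis
      unfolding sigmaX_eq_sqrt by simp
  qed
  show ?thesis
  proof (cases "sigmaX M X = 0")
    case True
    then show ?thesis
      using weighted_le[OF Z(1,2)] by simp
  next
    case False
    then have "0 < sigmaX M X"
      using sigmaX_nonneg by (simp add: less_le)
    have "bdd_above S"
      using weighted_le \<open>0 < sigmaX M X\<close> unfolding S_def
      by (intro bdd_aboveI[where M=1]) (auto simp: divide_le_eq_1)
    moreover have "sqrt (\<integral>x. (X x - meanX M X)\<^sup>2 * Z x \<partial>M) / sigmaX M X \<in> S"
      unfolding S_def using Z by blast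
    ultimately have "sqrt (\<integral>x. (X x - meanX M X)\<^sup>2 * Z x \<partial>M) / sigmaX M X \<le> rho2 M X \<xi>"
      using False unfolding rho2_def S_def[symmetric] by (simp add: cSup_upper)
    then show ?thesis
      using \<open>0 < sigmaX M X\<close> by (simp add: divide_le_eq)
  qed
qed

lemma rho2_nonneg:
  assumes "integrable M (\<lambda>x. (X x - meanX M X)\<^sup>2)" "0 \<le> \<xi>"
  shows "0 \<le> rho2 M X \<xi>"
proof (cases "sigmaX M X = 0")
  case False
  have "0 \<le> rho2 M X \<xi> * sigmaX M X"
    using weighted_variance_le_rho2[OF assms(1), of "\<lambda>_. 0"] assms(2) by simp
  moreover have "0 < sigmaX M X"
    using False sigmaX_nonneg by (simp add: less_le)
  ultimately show ?thesis
    by (simp add: zero_le_mult_iff)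
qed (simp add: rho2_def)

locale trimmed_rv = prob_space M for M :: "'a measure" +
  fixes X :: "'a \<Rightarrow> real" and a b :: real
  assumes X_measurable: "X \<in> borel_measurable M"
    and trim_bounds: "0 < a" "a < b" "b < 1"
begin

sublocale quantile_trimming "quantile M X" a b
  using mono_on_quantile[OF prob_space_axioms X_measurable] trim_bounds by unfold_locales auto

lemmas integrable_quantile_iff = integrable_quantile_iff[OF prob_space_axioms X_measurable]
lemmas integral_quantile = integral_quantile[OF prob_space_axioms X_measurable]

lemma sigma_ab_eq: "sigma_ab M X a b = sqrt trimmed_var"
  unfolding sigma_ab_def mu_ab_def trimmed_var_def trimmed_mean_def ..

lemma sigma_ab_nonneg: "0 \<le> sigma_ab M X a b"
  by (simp add: sigma_ab_eq trimmed_var_nonneg)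

lemma sigma_ab_le_divide:
  assumes "sqrt (b - a) * sigma_ab M X a b \<le> B"
  shows "sigma_ab M X a b \<le> B / (b - a)"
proof -
  have "b - a \<le> sqrt (b - a)"
    using trim_bounds by (intro real_le_rsqrt) (simp add: power2_eq_square mult_left_le)
  then have "(b - a) * sigma_ab M X a b \<le> B"
    using assms mult_right_mono[OF _ sigma_ab_nonneg] order.trans by blast
  then show ?thesis
    using trim_bounds by (simp add: pos_le_divide_eq mult.commute)
qed

lemma sigma_ab_le_sigmaX:
  assumes "integrable M (\<lambda>x. (X x - meanX M X)\<^sup>2)"
  shows "sqrt (b - a) * sigma_ab M X a b \<le> sigmaX M X"
proof -
  have "set_integrable lborel {0<..<1} (\<lambda>u. (quantile M X u - meanX M X)\<^sup>2)"
    using assms integrable_quantile_iff[of "\<lambda>t. (t - meanX M X)\<^sup>2"] by simp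
  then have "(b - a) * trimmed_var \<le> (\<integral>x. (X x - meanX M X)\<^sup>2 \<partial>M)"
    using trimmed_var_le_integral integral_quantile[of "\<lambda>t. (t - meanX M X)\<^sup>2"] by simp
  then show ?thesis
    unfolding sigma_ab_eq sigmaX_eq_sqrt by (metis real_sqrt_le_mono real_sqrt_mult)
qed

lemma sigma_ab_le_nu:
  assumes q: "0 < q" "q \<le> 2" and moment: "integrable M (\<lambda>x. \<bar>X x - meanX M X\<bar> powr q)"
  shows "sqrt (b - a) * sigma_ab M X a b \<le> nu M X q powr (q / 2) * Delta_ab M X a b powr (1 - q / 2)"
proof -
  let ?N = "\<integral>x. \<bar>X x - meanX M X\<bar> powr q \<partial>M"
  have "set_integrable lborel {0<..<1} (\<lambda>u. \<bar>quantile M X u - meanX M X\<bar> powr q)"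
    using moment integrable_quantile_iff[of "\<lambda>t. \<bar>t - meanX M X\<bar> powr q"] by simp
  then have "(b - a) * trimmed_var \<le> Delta_ab M X a b powr (2 - q) * ?N"
    using trimmed_var_le_moment q integral_quantile[of "\<lambda>t. \<bar>t - meanX M X\<bar> powr q"]
    unfolding Delta_ab_def by simp
  then have "sqrt (b - a) * sqrt trimmed_var \<le> sqrt (Delta_ab M X a b powr (2 - q)) * sqrt ?N"
    by (metis real_sqrt_le_mono real_sqrt_mult)
  moreover have "sqrt (Delta_ab M X a b powr (2 - q)) = Delta_ab M X a b powr (1 - q / 2)"
    using Q_middle[of b] trim_bounds unfolding Delta_ab_def
    by (simp add: powr_half_sqrt_powr[symmetric] diff_divide_distrib)
  ultimately show ?thesis
    unfolding sigma_ab_eq nu_powr_half[OF q(1)] by (simp add: mult.commute)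
qed

lemma tails_variance_le_rho2:
  assumes square_int: "integrable M (\<lambda>x. (X x - meanX M X)\<^sup>2)"
  shows "(LINT u:tails|lborel. (quantile M X u - meanX M X)\<^sup>2)
       \<le> (rho2 M X (1 - (b - a)) * sigmaX M X)\<^sup>2"
proof -
  let ?T = "LINT u:tails|lborel. (quantile M X u - meanX M X)\<^sup>2"
  have quantile_square_int: "set_integrable lborel {0<..<1} (\<lambda>u. (quantile M X u - meanX M X)\<^sup>2)"
    using square_int integrable_quantile_iff[of "\<lambda>t. (t - meanX M X)\<^sup>2"] by simp
  have one_int: "set_integrable lborel {0<..<1::real} (\<lambda>u. 1)"
    unfolding set_integrable_def by simp
  have "(\<integral>x. tail_weight (X x) \<partial>M) = (LINT u:{0<..<1}|lborel. 1 * tail_weight (quantile M X u))"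
    by (simp add: integral_quantile)
  also have "\<dots> = measure lborel tails"
    using integral_tail_weight[of "\<lambda>_. 1"] one_int emeasure_subset_unit_interval_less_top[OF tails_subset]
    by (simp add: set_integral_const)
  finally have mass: "(\<integral>x. tail_weight (X x) \<partial>M) = 1 - (b - a)"
    unfolding measure_tails .
  have "(\<integral>x. (X x - meanX M X)\<^sup>2 * tail_weight (X x) \<partial>M) = ?T"
    using integral_quantile[of "\<lambda>t. (t - meanX M X)\<^sup>2 * tail_weight t"]
      integral_tail_weight[of "\<lambda>t. (t - meanX M X)\<^sup>2"] quantile_square_int
    by simp
  then have "sqrt ?T \<le> rho2 M X (1 - (b - a)) * sigmaX M X"
    using weighted_variance_le_rho2[OF square_int, of "\<lambda>x. tail_weight (X x)"]
      X_measurable tail_weight_bounds mass by simp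
  moreover have "0 \<le> ?T"
    by (simp add: set_integral_nonneg)
  ultimately show ?thesis
    using real_sqrt_ge_zero power_mono real_sqrt_pow2 by metis
qed

lemma variance_le_trimmed_var:
  assumes "integrable M X" and square_int: "integrable M (\<lambda>x. (X x - meanX M X)\<^sup>2)"
  shows "(1 - (rho2 M X (1 - (b - a)))\<^sup>2 / (b - a)) * (sigmaX M X)\<^sup>2 \<le> (b - a) * trimmed_var"
proof -
  let ?V = "LINT u:{0<..<1}|lborel. (quantile M X u - meanX M X)\<^sup>2"
  let ?T = "LINT u:tails|lborel. (quantile M X u - meanX M X)\<^sup>2"
  have "set_integrable lborel {0<..<1} (quantile M X)"
    and "(LINT u:{0<..<1}|lborel. quantile M X u) = meanX M X"
    using assms(1) integrable_quantile_iff[of "\<lambda>t. t"] integral_quantile[of "\<lambda>t. t"]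
    by (simp_all add: meanX_def)
  moreover have "set_integrable lborel {0<..<1} (\<lambda>u. (quantile M X u - meanX M X)\<^sup>2)"
    using square_int integrable_quantile_iff[of "\<lambda>t. (t - meanX M X)\<^sup>2"] by simp
  ultimately have "?V \<le> (b - a) * trimmed_var + ?T / (b - a)"
    by (intro variance_le_trimmed_var_tails)
  moreover have "?V = (sigmaX M X)\<^sup>2"
    using integral_quantile[of "\<lambda>t. (t - meanX M X)\<^sup>2"] set_integral_nonneg[of _ "\<lambda>u. (quantile M X u - meanX M X)\<^sup>2"]
    unfolding sigmaX_eq_sqrt by simp
  moreover have "?T \<le> (rho2 M X (1 - (b - a)))\<^sup>2 * (sigmaX M X)\<^sup>2"
    using tails_variance_le_rho2[OF square_int] by (simp add: power_mult_distrib)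
  ultimately have "(sigmaX M X)\<^sup>2 - (rho2 M X (1 - (b - a)))\<^sup>2 * (sigmaX M X)\<^sup>2 / (b - a)
      \<le> (b - a) * trimmed_var"
    using divide_right_mono[of ?T _ "b - a"] trim_bounds by fastforce
  then show ?thesis
    by (simp add: algebra_simps)
qed

lemma sigmaX_le_sigma_ab:
  assumes "integrable M X" and square_int: "integrable M (\<lambda>x. (X x - meanX M X)\<^sup>2)"
    and middle_large: "1 - (b - a) < 1 / 2" and rho_small: "rho2 M X (1 - (b - a)) < 1 / 3"
  shows "sigmaX M X
       \<le> sqrt ((b - a) / (1 - (1 + (b - a)) / (b - a) * (rho2 M X (1 - (b - a)))\<^sup>2)) * sigma_ab M X a b"
proof -
  define p where "p = b - a"
  define r where "r = (rho2 M X (1 - p))\<^sup>2"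
  define D where "D = 1 - (1 + p) / p * r"
  have p: "1 / 2 < p" "p < 1"
    using middle_large trim_bounds unfolding p_def by auto
  have rho: "0 \<le> rho2 M X (1 - p)" "rho2 M X (1 - p) < 1 / 3"
    using rho2_nonneg[OF square_int, of "1 - p"] rho_small p unfolding p_def by auto
  have r: "0 \<le> r" "r < 1 / 9"
    using power_strict_mono[OF rho(2) rho(1), of 2] unfolding r_def by (auto simp: power_divide)
  have "(1 + p) / p < 3"
    using p by (simp add: field_simps)
  then have "(1 + p) / p * r \<le> 3 * r"
    using r by (intro mult_right_mono) auto
  then have D_pos: "0 < D"
    using r unfolding D_def by linarith
  have "D \<le> 1 - r / p"
    using r p unfolding D_def by (simp add: field_simps)
  then have "D * (sigmaX M X)\<^sup>2 \<le> p * trimmed_var"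
    using variance_le_trimmed_var[OF assms(1,2)] unfolding p_def[symmetric] r_def[symmetric]
    by (meson mult_right_mono order.trans zero_le_power2)
  then have "(sigmaX M X)\<^sup>2 \<le> p / D * trimmed_var"
    using D_pos by (simp add: field_simps)
  then have "sigmaX M X \<le> sqrt (p / D * trimmed_var)"
    by (rule real_le_rsqrt)
  then have "sigmaX M X \<le> sqrt (p / D) * sqrt trimmed_var"
    by (simp only: real_sqrt_mult)
  then show ?thesis
    unfolding sigma_ab_eq D_def r_def p_def .
qed

end

theorem proposition4p2:
  fixes M :: "'a measure" and X :: "'a \<Rightarrow> real" and a b \<xi> :: real
  assumes "prob_space M"
    and "X \<in> borel_measurable M"
    and "integrable M X"
    and "0 < a" and "a < b" and "b < 1"
    and "\<xi> = 1 - (b - a)"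
  shows "(integrable M (\<lambda>x. (X x - meanX M X)\<^sup>2) \<longrightarrow>
            sigma_ab M X a b \<le> sigmaX M X / (1 - \<xi>))
       \<and> (\<forall>q::real. 1 < q \<and> q \<le> 2 \<and> integrable M (\<lambda>x. \<bar>X x - meanX M X\<bar> powr q) \<longrightarrow>
            sigma_ab M X a b \<le> sqrt 2 * nu M X q powr (q / 2) * Delta_ab M X a b powr (1 - q / 2)
                                  / (1 - \<xi>))
       \<and> (integrable M (\<lambda>x. (X x - meanX M X)\<^sup>2) \<and> \<xi> < 1 / 2 \<and> rho2 M X \<xi> < 1 / 3 \<longrightarrow>
            sigmaX M X \<le> sqrt ((1 - \<xi>) / (1 - ((2 - \<xi>) / (1 - \<xi>)) * (rho2 M X \<xi>)\<^sup>2))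
                           * sigma_ab M X a b)"
proof -
  interpret trimmed_rv M X a b
    using assms by (simp add: trimmed_rv_def trimmed_rv_axioms_def)
  have xi: "1 - \<xi> = b - a" "2 - \<xi> = 1 + (b - a)"
    using assms(7) by auto
  have "sigma_ab M X a b \<le> sigmaX M X / (b - a)"
    if "integrable M (\<lambda>x. (X x - meanX M X)\<^sup>2)"
    using sigma_ab_le_sigmaX[OF that] by (rule sigma_ab_le_divide)
  moreover have "sigma_ab M X a b
      \<le> sqrt 2 * nu M X q powr (q / 2) * Delta_ab M X a b powr (1 - q / 2) / (b - a)"
    if "1 < q" "q \<le> 2" "integrable M (\<lambda>x. \<bar>X x - meanX M X\<bar> powr q)" for q
  proof -
    let ?B = "nu M X q powr (q / 2) * Delta_ab M X a b powr (1 - q / 2)"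
    have "sigma_ab M X a b \<le> ?B / (b - a)"
      using sigma_ab_le_nu[of q] that by (intro sigma_ab_le_divide) auto
    also have "\<dots> \<le> sqrt 2 * ?B / (b - a)"
      using sigma_ab_nonneg calculation mult_right_mono[of 1 "sqrt 2" "?B / (b - a)"] by simp
    finally show ?thesis
      by (simp add: mult.assoc)
  qed
  ultimately show ?thesis
    using sigmaX_le_sigma_ab assms(3) unfolding xi assms(7) by auto
qed

end
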